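(* For every integer $n \geq 1$, $\left\langle m_{(1,1)}^n, s_{(2^n)} \right\rangle = R(n)$.
   Context: $m_\lambda$ and $s_\lambda$ denote the monomial and Schur symmetric functions, and $\langle\cdot,\cdot\rangle$ is the Hall inner product on symmetric functions (for which the Schur functions are orthonormal). $m_{(1,1)} = \sum_{i<j} x_i x_j$, and $(2^n)$ is the partition with $n$ parts equal to $2$. $R(n)$ is the $n$-th Riordan number: the number of Motzkin paths of length $n$ (lattice paths from $(0,0)$ to $(n,0)$ with steps $(1,1),(1,0),(1,-1)$ never going below the $x$-axis) that have no flat step $(1,0)$ on the $x$-axis. *)

theory Defs
  imports Main "HOL-Library.Poly_Mapping"
begin

text \<open>Polynomials in the variables x_0, x_1, ... with integer coefficients:
  finitely supported maps from exponent vectors (nat to nat, finitely supported) to int,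
  with the convolution product of HOL-Library.Poly_Mapping.\<close>

type_synonym ipoly = "(nat \<Rightarrow>\<^sub>0 nat) \<Rightarrow>\<^sub>0 int"

definition var :: "nat \<Rightarrow> ipoly" where
  "var i = Poly_Mapping.single (Poly_Mapping.single i 1) 1"

definition const :: "int \<Rightarrow> ipoly" where
  "const c = Poly_Mapping.single 0 c"

definition is_partition :: "nat list \<Rightarrow> bool" where
  "is_partition lam \<longleftrightarrow> sorted_wrt (\<ge>) lam \<and> 0 \<notin> set lam"

definition partitions_of :: "nat \<Rightarrow> nat list set" where
  "partitions_of d = {lam. is_partition lam \<and> sum_list lam = d}"

definition m11 :: "nat \<Rightarrow> ipoly" where
  "m11 N = (\<Sum>(i,j)\<in>{(i,j). i < j \<and> j < N}. var i * var j)"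

definition cells :: "nat list \<Rightarrow> (nat \<times> nat) set" where
  "cells lam = {(i,j). i < length lam \<and> j < lam ! i}"

definition ssyt :: "nat list \<Rightarrow> nat \<Rightarrow> ((nat \<times> nat) \<Rightarrow> nat) set" where
  "ssyt lam N = {T. (\<forall>c. c \<notin> cells lam \<longrightarrow> T c = 0)
      \<and> (\<forall>c\<in>cells lam. T c < N)
      \<and> (\<forall>i j. (i, Suc j) \<in> cells lam \<longrightarrow> T (i,j) \<le> T (i, Suc j))
      \<and> (\<forall>i j. (Suc i, j) \<in> cells lam \<longrightarrow> T (i,j) < T (Suc i, j))}"

definition content :: "nat list \<Rightarrow> ((nat \<times> nat) \<Rightarrow> nat) \<Rightarrow> (nat \<Rightarrow>\<^sub>0 nat)" where
  "content lam T = (\<Sum>c\<in>cells lam. Poly_Mapping.single (T c) 1)"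

definition schur :: "nat list \<Rightarrow> nat \<Rightarrow> ipoly" where
  "schur lam N = (\<Sum>T\<in>ssyt lam N. Poly_Mapping.single (content lam T) 1)"

text \<open>Riordan numbers: Motzkin paths of length n (steps -1,0,1), never below 0,
  ending at 0, with no flat step at height 0.\<close>

definition riordan_paths :: "nat \<Rightarrow> int list set" where
  "riordan_paths n = {s. length s = n \<and> set s \<subseteq> {-1, 0, 1}
      \<and> (\<forall>k\<le>n. sum_list (take k s) \<ge> 0)
      \<and> sum_list s = 0
      \<and> (\<forall>k<n. s ! k = 0 \<longrightarrow> sum_list (take k s) > 0)}"

definition riordan :: "nat \<Rightarrow> nat" where
  "riordan n = card (riordan_paths n)"

end

(* Since m_(1,1) = e_2, the Pieri rule says that m_(1,1) s_mu is the sum of the s_lam over all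
   lam obtained from mu by adding two boxes in different rows; it is proved bijectively by
   inserting two entries i < j into a tableau with Schensted row insertion. So the coefficient
   of s_lam in m_(1,1)^n counts chains of such vertical 2-strips from the empty shape to lam.
   These coefficients are unique as long as N >= 2n, because Schur polynomials are
   unitriangular with respect to monomials in the dominance (hence lexicographic) order.
   A chain ending at (2^n) only passes through shapes with a rows of length 2 and 2h rows of
   length 1; reading h as a height, adding two boxes to the first column, one box to each
   column, or two boxes to the second column are up, flat and down steps, and a flat step is
   impossible at height 0. Hence the chains ending at (2^n) are exactly the Riordan paths. *)

theory Submission
  imports Defs "HOL-Library.Multiset" "HOL-Library.List_Lexorder"
begin

section \<open>Partitions\<close>

definition nth_part :: "nat list \<Rightarrow> nat \<Rightarrow> nat" where
  "nth_part lam i = (if i < length lam then lam ! i else 0)"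

lemma nth_part_Nil [simp]: "nth_part [] i = 0"
  by (simp add: nth_part_def)

lemma nth_part_Cons_0 [simp]: "nth_part (l # lam) 0 = l"
  by (simp add: nth_part_def)

lemma nth_part_Cons_Suc [simp]: "nth_part (l # lam) (Suc i) = nth_part lam i"
  by (simp add: nth_part_def)

lemma is_partition_Cons:
  "is_partition (l # lam) \<longleftrightarrow> (\<forall>y\<in>set lam. y \<le> l) \<and> 0 < l \<and> is_partition lam"
  unfolding is_partition_def by auto

lemma nth_part_antimono: "is_partition lam \<Longrightarrow> i \<le> j \<Longrightarrow> nth_part lam j \<le> nth_part lam i"
  unfolding is_partition_def nth_part_def
  by (cases "i = j") (auto simp: sorted_wrt_iff_nth_less)

lemma nth_part_pos_iff: "is_partition lam \<Longrightarrow> 0 < nth_part lam i \<longleftrightarrow> i < length lam"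
  unfolding is_partition_def nth_part_def by (auto intro!: gr0I dest: nth_mem)

lemma partition_eqI:
  assumes "is_partition lam" "is_partition mu" "\<And>k. nth_part lam k = nth_part mu k"
  shows "lam = mu"
proof -
  have iff: "i < length lam \<longleftrightarrow> i < length mu" for i
    using nth_part_pos_iff[OF assms(1), of i] nth_part_pos_iff[OF assms(2), of i] assms(3) by simp
  have len: "length lam = length mu"
    using iff[of "length lam"] iff[of "length mu"] by simp
  show ?thesis
  proof (rule nth_equalityI[OF len])
    fix i assume "i < length lam"
    then show "lam ! i = mu ! i"
      using assms(3)[of i] len by (simp add: nth_part_def)
  qed
qed

lemma sum_list_eq_sum_nth_part: "length lam \<le> K \<Longrightarrow> sum_list lam = (\<Sum>k<K. nth_part lam k)"
proof -
  assume K: "length lam \<le> K"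
  have "sum_list lam = (\<Sum>k<length lam. nth_part lam k)"
    by (simp add: sum_list_sum_nth nth_part_def atLeast0LessThan)
  also have "\<dots> = (\<Sum>k<K. nth_part lam k)"
    by (rule sum.mono_neutral_left) (use K in \<open>auto simp: nth_part_def\<close>)
  finally show ?thesis .
qed

lemma length_le_sum_list: "is_partition lam \<Longrightarrow> length lam \<le> sum_list lam"
  by (induction lam) (auto simp: is_partition_Cons)

lemma finite_partitions_of: "finite (partitions_of d)"
proof (rule finite_subset)
  show "partitions_of d \<subseteq> {xs. set xs \<subseteq> {..d} \<and> length xs \<le> d}"
    unfolding partitions_of_def using length_le_sum_list member_le_sum_list by fastforce
  show "finite {xs. set xs \<subseteq> {..d} \<and> length xs \<le> d}"
    by (rule finite_lists_length_le) simp
qed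

lemma partitions_of_0: "partitions_of 0 = {[]}"
proof -
  have "lam = []" if "is_partition lam" "sum_list lam = 0" for lam
    using length_le_sum_list[OF that(1)] that(2) by simp
  then show ?thesis unfolding partitions_of_def by (auto simp: is_partition_def)
qed

section \<open>Tableaux as lists of rows and row insertion\<close>

definition row_above :: "nat list \<Rightarrow> nat list \<Rightarrow> bool" where
  "row_above r s \<longleftrightarrow> length s \<le> length r \<and> (\<forall>j<length s. r ! j < s ! j)"

fun is_tableau :: "nat list list \<Rightarrow> bool" where
  "is_tableau [] = True"
| "is_tableau (r # R) \<longleftrightarrow>
     r \<noteq> [] \<and> sorted r \<and> (R \<noteq> [] \<longrightarrow> row_above r (hd R)) \<and> is_tableau R"

abbreviation shape :: "nat list list \<Rightarrow> nat list" where
  "shape R \<equiv> map length R"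

lemma is_partition_shape: "is_tableau R \<Longrightarrow> is_partition (shape R)"
proof (induction R)
  case (Cons r R)
  have "y \<le> length r" if y: "y \<in> set (shape R)" for y
  proof -
    obtain s R' where R: "R = s # R'" using y by (cases R) auto
    have "length s \<le> length r" using Cons.prems R by (simp add: row_above_def)
    moreover have "y \<le> length s" using Cons.IH Cons.prems y R by (auto simp: is_partition_Cons)
    ultimately show ?thesis by simp
  qed
  then show ?case using Cons by (auto simp: is_partition_Cons)
qed (simp add: is_partition_def)

definition bump_pos :: "nat \<Rightarrow> nat list \<Rightarrow> nat" where
  "bump_pos x r = length (takeWhile (\<lambda>z. z \<le> x) r)"

lemma bump_pos_le_length: "bump_pos x r \<le> length r"
  by (simp add: bump_pos_def length_takeWhile_le)

lemma nth_takeWhile_P: "k < length (takeWhile P xs) \<Longrightarrow> P (xs ! k)"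
  by (metis nth_mem set_takeWhileD takeWhile_nth)

lemma nth_before_bump_pos: "k < bump_pos x r \<Longrightarrow> r ! k \<le> x"
  unfolding bump_pos_def by (rule nth_takeWhile_P)

lemma nth_bump_pos_gt: "bump_pos x r < length r \<Longrightarrow> x < r ! bump_pos x r"
  unfolding bump_pos_def using nth_length_takeWhile[of "\<lambda>z. z \<le> x" r] by simp

lemma bump_pos_le:
  assumes "x < r ! k"
  shows "bump_pos x r \<le> k"
proof (rule ccontr)
  assume "\<not> bump_pos x r \<le> k"
  then have "r ! k \<le> x" by (intro nth_before_bump_pos) simp
  then show False using assms by simp
qed

lemma less_nth_from_bump_pos:
  assumes "sorted r" "bump_pos x r \<le> k" "k < length r"
  shows "x < r ! k"
proof -
  have "x < r ! bump_pos x r" using assms(2,3) by (intro nth_bump_pos_gt) simp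
  also have "\<dots> \<le> r ! k" using assms by (simp add: sorted_nth_mono)
  finally show ?thesis .
qed

lemma bump_pos_eqI:
  assumes "p \<le> length r" "\<And>k. k < p \<Longrightarrow> r ! k \<le> x" "p < length r \<Longrightarrow> x < r ! p"
  shows "bump_pos x r = p"
proof -
  have "takeWhile (\<lambda>z. z \<le> x) r = take p r"
    by (rule takeWhile_eq_take_P_nth) (use assms in auto)
  then show ?thesis using assms(1) by (simp add: bump_pos_def)
qed

definition place :: "nat \<Rightarrow> nat \<Rightarrow> nat list \<Rightarrow> nat list" where
  "place p x r = (if p < length r then r[p := x] else r @ [x])"

lemma length_place: "p \<le> length r \<Longrightarrow> length (place p x r) = max (length r) (Suc p)"
  by (auto simp: place_def)

lemma nth_place:
  "p \<le> length r \<Longrightarrow> k < length (place p x r) \<Longrightarrow> place p x r ! k = (if k = p then x else r ! k)"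
  by (auto simp: place_def nth_append)

lemma sorted_list_update:
  assumes "sorted r" "\<And>k. k < p \<Longrightarrow> r ! k \<le> x" "\<And>k. p < k \<Longrightarrow> k < length r \<Longrightarrow> x \<le> r ! k"
  shows "sorted (r[p := x])"
  unfolding sorted_iff_nth_mono
proof (intro allI impI)
  fix i j assume ij: "i \<le> j" "j < length (r[p := x])"
  consider "i = p" "j = p" | "i = p" "j \<noteq> p" | "i \<noteq> p" "j = p" | "i \<noteq> p" "j \<noteq> p"
    by blast
  then show "r[p := x] ! i \<le> r[p := x] ! j"
  proof cases
    case 2
    then show ?thesis using ij assms(3)[of j] by simp
  next
    case 3
    then show ?thesis using ij assms(2)[of i] by simp
  next
    case 4
    then show ?thesis using ij sorted_nth_mono[OF assms(1), of i j] by simp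
  qed simp
qed

lemma sorted_place_bump_pos:
  assumes "sorted r"
  shows "sorted (place (bump_pos x r) x r)"
proof (cases "bump_pos x r < length r")
  case True
  have "sorted (r[bump_pos x r := x])"
    using nth_before_bump_pos less_nth_from_bump_pos[OF assms]
    by (intro sorted_list_update[OF assms]) (auto intro: less_imp_le)
  then show ?thesis using True by (simp add: place_def)
next
  case False
  then have "bump_pos x r = length r" using bump_pos_le_length[of x r] by simp
  then have "\<forall>z\<in>set r. z \<le> x" using nth_before_bump_pos by (auto simp: in_set_conv_nth)
  then show ?thesis using assms False by (simp add: place_def sorted_append)
qed

fun row_insert :: "nat \<Rightarrow> nat list list \<Rightarrow> nat list list" where
  "row_insert x [] = [[x]]"
| "row_insert x (r # R) = place (bump_pos x r) x r #
     (if bump_pos x r < length r then row_insert (r ! bump_pos x r) R else R)"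

fun new_box_row :: "nat \<Rightarrow> nat list list \<Rightarrow> nat" where
  "new_box_row x [] = 0"
| "new_box_row x (r # R) =
     (if bump_pos x r < length r then Suc (new_box_row (r ! bump_pos x r) R) else 0)"

lemma hd_row_insert:
  "row_insert y R \<noteq> [] \<and>
    hd (row_insert y R) = place (bump_pos y (if R = [] then [] else hd R)) y (if R = [] then [] else hd R)"
  by (cases R) (auto simp: place_def bump_pos_def)

lemma row_above_bump:
  fixes r s :: "nat list" and x :: nat
  defines "p \<equiv> bump_pos x r" and "y \<equiv> r ! bump_pos x r"
  assumes above: "row_above r s" and p_len: "p < length r"
  shows "row_above (r[p := x]) (place (bump_pos y s) y s)"
proof -
  define q where "q = bump_pos y s"
  have x_y: "x < y" using p_len nth_bump_pos_gt unfolding p_def y_def by auto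
  have q_len: "q \<le> length s" unfolding q_def by (rule bump_pos_le_length)
  have "q \<le> p"
  proof (cases "p < length s")
    case True
    then have "y < s ! p" using above unfolding row_above_def y_def p_def by auto
    then show ?thesis unfolding q_def using bump_pos_le True by blast
  next
    case False
    then show ?thesis using q_len by simp
  qed
  have upd_le_x: "r[p := x] ! k \<le> x" if "k \<le> p" for k
    using that p_len nth_before_bump_pos[of k x r] unfolding p_def
    by (cases "k = bump_pos x r") auto
  have upd_le: "r[p := x] ! k \<le> r ! k" for k
    using x_y p_len unfolding y_def p_def by (cases "k = bump_pos x r") auto
  show ?thesis
    unfolding row_above_def q_def[symmetric]
  proof (intro conjI allI impI)
    show "length (place q y s) \<le> length (r[p := x])"
      using length_place[OF q_len] above p_len \<open>q \<le> p\<close> unfolding row_above_def by auto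
  next
    fix k assume k: "k < length (place q y s)"
    show "r[p := x] ! k < place q y s ! k"
    proof (cases "k = q")
      case True
      then show ?thesis using nth_place[OF q_len k] upd_le_x[of k] \<open>q \<le> p\<close> x_y by simp
    next
      case False
      then have "k < length s" using k length_place[OF q_len] q_len by auto
      then show ?thesis
        using nth_place[OF q_len k] upd_le[of k] above False unfolding row_above_def
        by (metis le_less_trans)
    qed
  qed
qed

lemma row_above_snoc: "row_above r s \<Longrightarrow> row_above (r @ [x]) s"
  unfolding row_above_def by (auto simp: nth_append)

lemma is_tableau_row_insert: "is_tableau R \<Longrightarrow> is_tableau (row_insert x R)"
proof (induction R arbitrary: x)
  case (Cons r R)
  define p where "p = bump_pos x r"
  have r: "r \<noteq> []" "sorted r" "R \<noteq> [] \<longrightarrow> row_above r (hd R)" "is_tableau R"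
    using Cons.prems by auto
  have top: "place p x r \<noteq> []" "sorted (place p x r)"
    using sorted_place_bump_pos[OF r(2)] by (auto simp: place_def p_def)
  show ?case
  proof (cases "p < length r")
    case True
    define y where "y = r ! p"
    define s where "s = (if R = [] then [] else hd R)"
    have "row_above r s" using r(3) by (simp add: s_def row_above_def)
    then have "row_above (place p x r) (hd (row_insert y R))"
      using row_above_bump[of r s x] hd_row_insert[of y R] True
      by (simp add: p_def y_def s_def place_def)
    then show ?thesis
      using top Cons.IH[OF r(4)] hd_row_insert[of y R] True by (simp add: p_def y_def)
  next
    case False
    then have "place p x r = r @ [x]" by (simp add: place_def)
    then show ?thesis using top r row_above_snoc False by (simp add: p_def)
  qed
qed simp

lemma nth_part_shape_row_insert:
  "nth_part (shape (row_insert x R)) k = nth_part (shape R) k + of_bool (k = new_box_row x R)"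
proof (induction R arbitrary: x k)
  case Nil
  then show ?case by (cases k) auto
next
  case (Cons r R)
  then show ?case
    using length_place[OF bump_pos_le_length, of x r x] bump_pos_le_length[of x r]
    by (cases k) auto
qed

lemma mset_concat_row_insert: "mset (concat (row_insert x R)) = add_mset x (mset (concat R))"
proof (induction R arbitrary: x)
  case (Cons r R)
  then show ?case by (auto simp: place_def mset_update)
qed simp

lemma set_concat_row_insert: "set (concat (row_insert x R)) = insert x (set (concat R))"
  using arg_cong[OF mset_concat_row_insert, of set_mset] by simp

lemma new_box_row_less: "x' < x \<Longrightarrow> new_box_row x R < new_box_row x' (row_insert x R)"
proof (induction R arbitrary: x x')
  case Nil
  then show ?case by (simp add: bump_pos_def)
next
  case (Cons r R)
  define p where "p = bump_pos x r"
  show ?case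
  proof (cases "p < length r")
    case True
    define p' where "p' = bump_pos x' (r[p := x])"
    have "x < r ! p" using nth_bump_pos_gt True by (simp add: p_def)
    have "p' \<le> p" using bump_pos_le[of x' "r[p := x]" p] True Cons.prems by (simp add: p'_def)
    then have "r[p := x] ! p' < r ! p"
      using nth_before_bump_pos[of p' x r] \<open>x < r ! p\<close> True
      by (cases "p' = p") (auto simp: p_def)
    then show ?thesis
      using Cons.IH \<open>p' \<le> p\<close> True by (simp add: p_def p'_def place_def)
  next
    case False
    then have "bump_pos x' (r @ [x]) < length (r @ [x])"
      using bump_pos_le[of x' "r @ [x]" "length r"] Cons.prems by simp
    then show ?thesis using False by (simp add: p_def place_def)
  qed
qed

lemma new_box_row_le: "is_tableau R \<Longrightarrow> x \<le> x' \<Longrightarrow> new_box_row x' (row_insert x R) \<le> new_box_row x R"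
proof (induction R arbitrary: x x')
  case (Cons r R)
  define p where "p = bump_pos x r"
  have "sorted r" using Cons.prems by simp
  show ?case
  proof (cases "p < length r")
    case True
    define p' where "p' = bump_pos x' (r[p := x])"
    show ?thesis
    proof (cases "p' < length r")
      case True2: True
      have "x' < r[p := x] ! p'" using nth_bump_pos_gt True2 by (simp add: p'_def)
      moreover have "r[p := x] ! k \<le> x'" if "k \<le> p" for k
        using nth_before_bump_pos[of k x r] that Cons.prems True
        by (cases "k = p") (auto simp: p_def)
      ultimately have "p < p'" using not_le by blast
      then have "r ! p \<le> r[p := x] ! p'" using sorted_nth_mono[OF \<open>sorted r\<close>] True2 by simp
      then show ?thesis
        using Cons.IH Cons.prems True True2 by (simp add: p_def p'_def place_def)
    next
      case False
      then show ?thesis using True by (simp add: p_def p'_def place_def)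
    qed
  next
    case False
    have "r ! k \<le> x'" if "k < length r" for k
      using nth_before_bump_pos[of k x r] that False Cons.prems by (simp add: p_def)
    then have "bump_pos x' (r @ [x]) = length (r @ [x])"
      using Cons.prems by (intro bump_pos_eqI) (auto simp: nth_append)
    then show ?thesis using False by (simp add: p_def place_def)
  qed
qed (simp add: bump_pos_def)

section \<open>Reverse row insertion\<close>

definition unbump_pos :: "nat \<Rightarrow> nat list \<Rightarrow> nat" where
  "unbump_pos y s = length (takeWhile (\<lambda>z. z < y) s) - 1"

(* Reverse bumping: the last entry of row r moves up, each row above giving back its largest
   entry below the incoming one.  The value on [] is junk. *)

fun row_delete :: "nat \<Rightarrow> nat list list \<Rightarrow> nat list list \<times> nat" where
  "row_delete r [] = ([], 0)"
| "row_delete 0 (s # R) = (if butlast s = [] then R else butlast s # R, last s)"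
| "row_delete (Suc r) (s # R) =
     (let (R', y) = row_delete r R; q = unbump_pos y s in (s[q := y] # R', s ! q))"

lemma unbump_pos_spec:
  assumes "sorted s" "j < length s" "s ! j < y"
  shows "j \<le> unbump_pos y s" "unbump_pos y s < length s" "s ! unbump_pos y s < y"
    "\<And>k. unbump_pos y s < k \<Longrightarrow> k < length s \<Longrightarrow> y \<le> s ! k"
proof -
  define L where "L = length (takeWhile (\<lambda>z. z < y) s)"
  have after: "y \<le> s ! k" if "L \<le> k" "k < length s" for k
  proof -
    have "L < length s" using that by simp
    then have "\<not> s ! L < y" unfolding L_def by (rule nth_length_takeWhile)
    moreover have "s ! L \<le> s ! k" using that assms(1) by (simp add: sorted_nth_mono)
    ultimately show ?thesis by simp
  qed
  have "j < L" using after[of j] assms(2,3) by (meson leD not_le_imp_less)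
  moreover have "L \<le> length s" unfolding L_def by (rule length_takeWhile_le)
  moreover have "s ! (L - 1) < y"
    using \<open>j < L\<close> nth_takeWhile_P[of "L - 1" "\<lambda>z. z < y" s] unfolding L_def by simp
  ultimately show "j \<le> unbump_pos y s" "unbump_pos y s < length s" "s ! unbump_pos y s < y"
    "\<And>k. unbump_pos y s < k \<Longrightarrow> k < length s \<Longrightarrow> y \<le> s ! k"
    using after unfolding unbump_pos_def L_def[symmetric] by auto
qed

lemma row_delete_row_insert: "is_tableau R \<Longrightarrow> row_delete (new_box_row x R) (row_insert x R) = (R, x)"
proof (induction R arbitrary: x)
  case (Cons r R)
  define p where "p = bump_pos x r"
  have r: "r \<noteq> []" "sorted r" "is_tableau R" using Cons.prems by auto
  show ?case
  proof (cases "p < length r")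
    case True
    define y where "y = r ! p"
    have "x < y" using nth_bump_pos_gt True by (simp add: p_def y_def)
    have "sorted (r[p := x])"
      using sorted_place_bump_pos[OF r(2), of x] True by (simp add: place_def p_def)
    note q = unbump_pos_spec[OF this, of p y]
    have "unbump_pos y (r[p := x]) = p"
    proof (rule antisym)
      show "p \<le> unbump_pos y (r[p := x])" using q True \<open>x < y\<close> by simp
      show "unbump_pos y (r[p := x]) \<le> p"
      proof (rule ccontr)
        assume "\<not> ?thesis"
        then have "y \<le> r[p := x] ! unbump_pos y (r[p := x])"
          using sorted_nth_mono[OF r(2), of p "unbump_pos y (r[p := x])"] q True \<open>x < y\<close>
          by (simp add: y_def)
        then show False using q True \<open>x < y\<close> by simp
      qed
    qed
    then show ?thesis using Cons.IH[OF r(3)] True \<open>x < y\<close> by (simp add: p_def y_def place_def)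
  next
    case False
    then show ?thesis using r(1) by (simp add: p_def place_def)
  qed
qed simp

lemma row_above_unbump:
  assumes above: "row_above s (place j y t)" and "sorted t" "j = bump_pos y t" "j \<le> q" "q < length s"
  shows "row_above (s[q := y]) t"
proof -
  have j: "j \<le> length t" using assms(3) bump_pos_le_length by simp
  have below: "s ! k < place j y t ! k" if "k < length (place j y t)" for k
    using above that unfolding row_above_def by blast
  have "s[q := y] ! k < t ! k" if k: "k < length t" for k
  proof (cases "k = q")
    case True
    then have "y < t ! j" using nth_bump_pos_gt assms(3,4) k by simp
    also have "t ! j \<le> t ! q" using sorted_nth_mono[OF assms(2)] assms(4) True k by simp
    finally show ?thesis using True assms(5) by simp
  next
    case False
    have kl: "k < length (place j y t)" using k length_place[OF j] by simp
    show ?thesis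
    proof (cases "k = j")
      case True
      then have "s ! k < y" using below[OF kl] nth_place[OF j kl] by simp
      also have "y < t ! k" using True k nth_bump_pos_gt assms(3) by simp
      finally show ?thesis using False by simp
    next
      case False2: False
      then show ?thesis using below[OF kl] nth_place[OF j kl] False by simp
    qed
  qed
  moreover have "length t \<le> length s" using above length_place[OF j] unfolding row_above_def by auto
  ultimately show ?thesis unfolding row_above_def by simp
qed

lemma row_insert_last_butlast:
  assumes "is_tableau (s # R)" "butlast s \<noteq> []" "R \<noteq> [] \<longrightarrow> length (hd R) < length s"
  shows "is_tableau (butlast s # R) \<and> row_insert (last s) (butlast s # R) = s # R
    \<and> new_box_row (last s) (butlast s # R) = 0"
proof -
  have s: "sorted s" "s = butlast s @ [last s]" using assms(1,2) by auto
  have "butlast s ! k \<le> last s" if "k < length (butlast s)" for k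
    using that sorted_nth_mono[OF s(1), of k "length (butlast s)"] s(2)
    by (metis length_append_singleton less_imp_le_nat lessI nth_append nth_append_length)
  then have "bump_pos (last s) (butlast s) = length (butlast s)"
    by (intro bump_pos_eqI) auto
  moreover have "R \<noteq> [] \<longrightarrow> row_above (butlast s) (hd R)"
    using assms(1,3) by (auto simp: row_above_def nth_butlast)
  ultimately show ?thesis
    using assms(1,2) s by (simp add: place_def sorted_butlast)
qed

lemma row_insert_unbump:
  fixes s :: "nat list" and y :: nat
  defines "q \<equiv> unbump_pos y s"
  assumes "is_tableau (s # row_insert y R)" "is_tableau R"
  shows "is_tableau (s[q := y] # R) \<and> row_insert (s ! q) (s[q := y] # R) = s # row_insert y R
    \<and> new_box_row (s ! q) (s[q := y] # R) = Suc (new_box_row y R)"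
proof -
  define t where "t = (if R = [] then [] else hd R)"
  define j where "j = bump_pos y t"
  have s: "s \<noteq> []" "sorted s" "row_above s (place j y t)"
    using assms(2) hd_row_insert[of y R] by (auto simp: t_def j_def)
  have t: "sorted t" "R \<noteq> [] \<Longrightarrow> t = hd R" using assms(3) by (cases R) (auto simp: t_def)
  have j: "j \<le> length t" unfolding j_def by (rule bump_pos_le_length)
  have jl: "j < length (place j y t)" using length_place[OF j, of y] by simp
  then have "j < length s" "s ! j < y"
    using s(3) nth_place[OF j jl] unfolding row_above_def by auto
  note q = unbump_pos_spec[OF s(2) this, folded q_def]
  have "s ! k \<le> y" if "k < q" for k
    using sorted_nth_mono[OF s(2), of k q] q(2,3) that by simp
  then have "sorted (s[q := y])"
    using q(4) by (intro sorted_list_update[OF s(2)]) auto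
  moreover have "R \<noteq> [] \<longrightarrow> row_above (s[q := y]) (hd R)"
    using row_above_unbump[OF s(3) t(1) j_def q(1,2)] t(2) by auto
  moreover have "bump_pos (s ! q) (s[q := y]) = q"
    using q sorted_nth_mono[OF s(2), of _ q] by (intro bump_pos_eqI) auto
  ultimately show ?thesis
    using s(1) q assms(3) by (simp add: place_def)
qed

definition corner :: "nat \<Rightarrow> nat list \<Rightarrow> bool" where
  "corner r lam \<longleftrightarrow> nth_part lam (Suc r) < nth_part lam r"

lemma row_insert_row_delete:
  "is_tableau R' \<Longrightarrow> corner r (shape R') \<Longrightarrow> row_delete r R' = (R, x) \<Longrightarrow>
    is_tableau R \<and> row_insert x R = R' \<and> new_box_row x R = r"
proof (induction R' arbitrary: r R x)
  case Nil
  then show ?case by (simp add: corner_def)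
next
  case (Cons s R')
  show ?case
  proof (cases r)
    case 0
    have R: "R = (if butlast s = [] then R' else butlast s # R')" "x = last s"
      using Cons.prems(3) 0 by auto
    have short: "R' \<noteq> [] \<longrightarrow> length (hd R') < length s"
      using Cons.prems(2) 0 by (cases R') (auto simp: corner_def)
    show ?thesis
    proof (cases "butlast s = []")
      case True
      then have "s = [x]" using R(2) Cons.prems(1) by (metis append_butlast_last_id append_Nil is_tableau.simps(2))
      moreover have "R' = []" using short Cons.prems(1) \<open>s = [x]\<close> by (cases R') auto
      ultimately show ?thesis using R True 0 by simp
    next
      case False
      then show ?thesis using row_insert_last_butlast[OF Cons.prems(1) False short] R 0 by simp
    qed
  next
    case (Suc r')
    obtain R1 y where R1: "row_delete r' R' = (R1, y)" by fastforce
    define q where "q = unbump_pos y s"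
    have R: "R = s[q := y] # R1" "x = s ! q"
      using Cons.prems(3) Suc R1 by (auto simp: q_def Let_def)
    have "corner r' (shape R')" using Cons.prems(2) Suc by (simp add: corner_def)
    then have "is_tableau R1" "R' = row_insert y R1" "new_box_row y R1 = r'"
      using Cons.IH[OF _ _ R1] Cons.prems(1) by auto
    then show ?thesis
      using row_insert_unbump[of s y R1, folded q_def] Cons.prems(1) Suc R by simp
  qed
qed

section \<open>The Pieri rule for m_(1,1)\<close>

definition vstrip2 :: "nat list \<Rightarrow> nat list set" where
  "vstrip2 mu = {lam. is_partition lam \<and> (\<exists>r1 r2. r1 < r2 \<and>
      (\<forall>k. nth_part lam k = nth_part mu k + of_bool (k = r1) + of_bool (k = r2)))}"

lemma vstrip2I:
  assumes "is_partition lam" "r1 < r2"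
    "\<And>k. nth_part lam k = nth_part mu k + of_bool (k = r1) + of_bool (k = r2)"
  shows "lam \<in> vstrip2 mu"
  using assms unfolding vstrip2_def by blast

lemma sum_list_vstrip2:
  assumes "lam \<in> vstrip2 mu"
  shows "sum_list lam = sum_list mu + 2"
proof -
  obtain r1 r2 where r: "r1 < r2"
    "\<And>k. nth_part lam k = nth_part mu k + of_bool (k = r1) + of_bool (k = r2)"
    using assms unfolding vstrip2_def by blast
  define K where "K = length lam + length mu + Suc r2"
  have "sum_list lam = (\<Sum>k<K. nth_part lam k)"
    by (rule sum_list_eq_sum_nth_part) (simp add: K_def)
  also have "\<dots> = (\<Sum>k<K. nth_part mu k) + (\<Sum>k<K. of_bool (k = r1)) + (\<Sum>k<K. of_bool (k = r2))"
    unfolding r(2) sum.distrib ..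
  also have "\<dots> = sum_list mu + 2"
    using r(1) sum_list_eq_sum_nth_part[of mu K] by (simp add: K_def of_bool_def sum.delta)
  finally show ?thesis .
qed

lemma vstrip2_subset_partitions_of: "vstrip2 mu \<subseteq> partitions_of (sum_list mu + 2)"
proof
  fix lam assume lam: "lam \<in> vstrip2 mu"
  then have "is_partition lam" by (simp add: vstrip2_def)
  with sum_list_vstrip2[OF lam] show "lam \<in> partitions_of (sum_list mu + 2)"
    by (simp add: partitions_of_def)
qed

lemma finite_vstrip2: "finite (vstrip2 mu)"
  using finite_subset[OF vstrip2_subset_partitions_of finite_partitions_of] .

lemma added_rows_unique:
  fixes f g :: "nat \<Rightarrow> nat"
  assumes "\<And>k. f k = g k + of_bool (k = a) + of_bool (k = b)" "a < b"
    and "\<And>k. f k = g k + of_bool (k = c) + of_bool (k = d)" "c < d"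
  shows "a = c \<and> b = d"
proof -
  have "{k. f k \<noteq> g k} = {a, b}" using assms(1) by auto
  moreover have "{k. f k \<noteq> g k} = {c, d}" using assms(3) by auto
  ultimately have "{a, b} = {c, d}" by simp
  then show ?thesis using assms(2,4) by (auto simp: doubleton_eq_iff)
qed

definition tableaux :: "nat \<Rightarrow> nat list \<Rightarrow> nat list list set" where
  "tableaux N lam = {R. is_tableau R \<and> set (concat R) \<subseteq> {..<N} \<and> shape R = lam}"

lemma finite_tableaux: "finite (tableaux N lam)"
proof (rule finite_subset)
  define K where "K = sum_list lam + length lam"
  show "tableaux N lam \<subseteq> {R. set R \<subseteq> {r. set r \<subseteq> {..<N} \<and> length r \<le> K} \<and> length R \<le> K}"
  proof
    fix R assume R: "R \<in> tableaux N lam"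
    have "length r \<le> K" "set r \<subseteq> {..<N}" if "r \<in> set R" for r
    proof -
      have "length r \<in> set lam" using R that by (auto simp: tableaux_def)
      then show "length r \<le> K" unfolding K_def using member_le_sum_list by fastforce
      show "set r \<subseteq> {..<N}" using R that by (auto simp: tableaux_def)
    qed
    moreover have "length R \<le> K" using R by (auto simp: tableaux_def K_def)
    ultimately show "R \<in> {R. set R \<subseteq> {r. set r \<subseteq> {..<N} \<and> length r \<le> K} \<and> length R \<le> K}"
      by auto
  qed
  show "finite {R. set R \<subseteq> {r. set r \<subseteq> {..<N} \<and> length r \<le> K} \<and> length R \<le> K}"
    by (intro finite_lists_length_le) simp_all
qed

lemma nth_part_shape_pieri_insert:
  "nth_part (shape (row_insert i (row_insert j R))) k = nth_part (shape R) k
     + of_bool (k = new_box_row j R) + of_bool (k = new_box_row i (row_insert j R))"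
  by (simp add: nth_part_shape_row_insert)

lemma pieri_insert_mem:
  assumes "R \<in> tableaux N mu" "i < j" "j < N"
  shows "row_insert i (row_insert j R) \<in> (\<Union>lam\<in>vstrip2 mu. tableaux N lam)"
proof -
  let ?R' = "row_insert i (row_insert j R)"
  have R: "is_tableau R" "set (concat R) \<subseteq> {..<N}" "shape R = mu"
    using assms(1) by (auto simp: tableaux_def)
  have "is_tableau ?R'" using R(1) by (intro is_tableau_row_insert)
  moreover have "shape ?R' \<in> vstrip2 mu"
    unfolding vstrip2_def
  proof (intro CollectI conjI exI allI)
    show "is_partition (shape ?R')" using \<open>is_tableau ?R'\<close> by (rule is_partition_shape)
    show "new_box_row j R < new_box_row i (row_insert j R)" using assms(2) by (rule new_box_row_less)
    show "nth_part (shape ?R') k = nth_part mu k + of_bool (k = new_box_row j R)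
        + of_bool (k = new_box_row i (row_insert j R))" for k
      using nth_part_shape_pieri_insert[of i j R k] R(3) by simp
  qed
  moreover have "set (concat ?R') \<subseteq> {..<N}"
    using R(2) assms(2,3) set_concat_row_insert[of i] set_concat_row_insert[of j R] by auto
  ultimately show ?thesis by (auto simp: tableaux_def)
qed

lemma pieri_insert_inj:
  assumes "R \<in> tableaux N mu" "R2 \<in> tableaux N mu" "i < j" "i2 < j2"
    and eq: "row_insert i (row_insert j R) = row_insert i2 (row_insert j2 R2)"
  shows "R = R2 \<and> i = i2 \<and> j = j2"
proof -
  have R: "is_tableau R" "is_tableau R2" "shape R = mu" "shape R2 = mu"
    using assms(1,2) by (auto simp: tableaux_def)
  let ?f = "nth_part (shape (row_insert i (row_insert j R)))"
  have f1: "?f k = nth_part mu k + of_bool (k = new_box_row j R)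
      + of_bool (k = new_box_row i (row_insert j R))" for k
    using nth_part_shape_pieri_insert[of i j R k] R(3) by simp
  have f2: "?f k = nth_part mu k + of_bool (k = new_box_row j2 R2)
      + of_bool (k = new_box_row i2 (row_insert j2 R2))" for k
    using nth_part_shape_pieri_insert[of i2 j2 R2 k] R(4) eq by simp
  have rows: "new_box_row j R = new_box_row j2 R2 \<and>
      new_box_row i (row_insert j R) = new_box_row i2 (row_insert j2 R2)"
    using added_rows_unique[OF f1 new_box_row_less[OF assms(3)] f2 new_box_row_less[OF assms(4)]] .
  have T: "is_tableau (row_insert j R)" "is_tableau (row_insert j2 R2)"
    using R(1,2) by (simp_all add: is_tableau_row_insert)
  have "(row_insert j R, i) = row_delete (new_box_row i (row_insert j R)) (row_insert i (row_insert j R))"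
    using row_delete_row_insert[OF T(1)] by simp
  also have "\<dots> = row_delete (new_box_row i2 (row_insert j2 R2)) (row_insert i2 (row_insert j2 R2))"
    using rows eq by simp
  also have "\<dots> = (row_insert j2 R2, i2)"
    using row_delete_row_insert[OF T(2)] by simp
  finally have "row_insert j R = row_insert j2 R2" "i = i2" by simp_all
  have "(R, j) = row_delete (new_box_row j R) (row_insert j R)"
    using row_delete_row_insert[OF R(1)] by simp
  also have "\<dots> = row_delete (new_box_row j2 R2) (row_insert j2 R2)"
    using rows \<open>row_insert j R = row_insert j2 R2\<close> by simp
  also have "\<dots> = (R2, j2)"
    using row_delete_row_insert[OF R(2)] by simp
  finally show ?thesis using \<open>i = i2\<close> by simp
qed

lemma row_insert_of_added_box:
  assumes "is_tableau R'" "\<And>k. nth_part (shape R') k = f k + of_bool (k = r)" "f (Suc r) \<le> f r"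
  obtains R x where "is_tableau R" "R' = row_insert x R" "new_box_row x R = r"
    "\<And>k. nth_part (shape R) k = f k"
proof -
  have corner: "corner r (shape R')"
    using assms(2)[of r] assms(2)[of "Suc r"] assms(3) unfolding corner_def by simp
  obtain R x where d: "row_delete r R' = (R, x)" by (cases "row_delete r R'")
  have R: "is_tableau R" "R' = row_insert x R" "new_box_row x R = r"
    using row_insert_row_delete[OF assms(1) corner d] by auto
  have "nth_part (shape R) k = f k" for k
    using nth_part_shape_row_insert[of x R k] assms(2)[of k] R(2,3) by simp
  with R show thesis by (rule that)
qed

lemma pieri_insert_surj:
  assumes mu: "is_partition mu" and "R' \<in> tableaux N lam" "lam \<in> vstrip2 mu"
  shows "\<exists>R i j. R \<in> tableaux N mu \<and> i < j \<and> j < N \<and> R' = row_insert i (row_insert j R)"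
proof -
  have R': "is_tableau R'" "set (concat R') \<subseteq> {..<N}" "shape R' = lam"
    using assms(2) by (auto simp: tableaux_def)
  obtain r1 r2 where r: "r1 < r2"
    "\<And>k. nth_part lam k = nth_part mu k + of_bool (k = r1) + of_bool (k = r2)"
    using assms(3) unfolding vstrip2_def by blast
  have mono: "nth_part mu (Suc k) \<le> nth_part mu k" for k
    using nth_part_antimono[OF mu] by simp
  have "nth_part (shape R') k = (nth_part mu k + of_bool (k = r1)) + of_bool (k = r2)" for k
    using r(2) R'(3) by simp
  moreover have "nth_part mu (Suc r2) + of_bool (Suc r2 = r1) \<le> nth_part mu r2 + of_bool (r2 = r1)"
    using mono[of r2] r(1) by simp
  ultimately obtain R1 i where R1: "is_tableau R1" "R' = row_insert i R1" "new_box_row i R1 = r2"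
    "\<And>k. nth_part (shape R1) k = nth_part mu k + of_bool (k = r1)"
    using row_insert_of_added_box[OF R'(1), of "\<lambda>k. nth_part mu k + of_bool (k = r1)" r2] by blast
  have "nth_part (shape R1) k = nth_part mu k + of_bool (k = r1)" for k
    using R1(4) by simp
  then obtain R j where R: "is_tableau R" "R1 = row_insert j R" "new_box_row j R = r1"
    "\<And>k. nth_part (shape R) k = nth_part mu k"
    using row_insert_of_added_box[OF R1(1), of "nth_part mu" r1] mono[of r1] by blast
  have "shape R = mu" using partition_eqI[OF is_partition_shape[OF R(1)] mu] R(4) by blast
  have "i < j"
  proof (rule ccontr)
    assume "\<not> i < j"
    then have "new_box_row i (row_insert j R) \<le> new_box_row j R"
      using new_box_row_le[OF R(1)] by simp
    then show False using R1(2,3) R(2,3) r(1) by simp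
  qed
  moreover have "insert i (insert j (set (concat R))) \<subseteq> {..<N}"
    using R'(2) R1(2) R(2) set_concat_row_insert[of i] set_concat_row_insert[of j R] by simp
  ultimately have "R \<in> tableaux N mu" "j < N" "R' = row_insert i (row_insert j R)"
    using R(1,2) R1(2) \<open>shape R = mu\<close> by (auto simp: tableaux_def)
  then show ?thesis using \<open>i < j\<close> by blast
qed

lemma pieri_insert_bij:
  assumes "is_partition mu"
  shows "bij_betw (\<lambda>(R, i, j). row_insert i (row_insert j R))
      (tableaux N mu \<times> {(i, j). i < j \<and> j < N}) (\<Union>lam\<in>vstrip2 mu. tableaux N lam)"
proof -
  let ?F = "\<lambda>(R, i, j). row_insert i (row_insert j R)"
  let ?D = "tableaux N mu \<times> {(i, j). i < j \<and> j < N}"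
  have "inj_on ?F ?D"
  proof (rule inj_onI)
    fix p q assume "p \<in> ?D" "q \<in> ?D" "?F p = ?F q"
    moreover obtain R i j R2 i2 j2 where "p = (R, i, j)" "q = (R2, i2, j2)"
      by (cases p, cases q) auto
    ultimately show "p = q" using pieri_insert_inj[of R N mu R2 i j i2 j2] by simp
  qed
  moreover have "?F ` ?D = (\<Union>lam\<in>vstrip2 mu. tableaux N lam)"
  proof
    show "?F ` ?D \<subseteq> (\<Union>lam\<in>vstrip2 mu. tableaux N lam)"
      using pieri_insert_mem by auto
    show "(\<Union>lam\<in>vstrip2 mu. tableaux N lam) \<subseteq> ?F ` ?D"
    proof
      fix R' assume "R' \<in> (\<Union>lam\<in>vstrip2 mu. tableaux N lam)"
      then obtain R i j where "R \<in> tableaux N mu" "i < j" "j < N" "R' = row_insert i (row_insert j R)"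
        using pieri_insert_surj[OF assms] by blast
      then show "R' \<in> ?F ` ?D" by (auto intro!: image_eqI[of _ _ "(R, i, j)"])
    qed
  qed
  ultimately show ?thesis by (rule bij_betw_imageI)
qed

section \<open>Schur polynomials from row tableaux and the expansion of m_(1,1)^n\<close>

definition tableau_monomial :: "nat list list \<Rightarrow> (nat \<Rightarrow>\<^sub>0 nat)" where
  "tableau_monomial R = (\<Sum>x\<leftarrow>concat R. Poly_Mapping.single x 1)"

definition schur_rows :: "nat \<Rightarrow> nat list \<Rightarrow> ipoly" where
  "schur_rows N lam = (\<Sum>R\<in>tableaux N lam. Poly_Mapping.single (tableau_monomial R) 1)"

lemma tableau_monomial_row_insert:
  "tableau_monomial (row_insert x R) = Poly_Mapping.single x 1 + tableau_monomial R"
proof -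
  have "tableau_monomial R = (\<Sum>x\<in>#mset (concat R). Poly_Mapping.single x 1)" for R
    unfolding tableau_monomial_def by (simp add: sum_mset_sum_list[symmetric])
  then show ?thesis by (simp add: mset_concat_row_insert)
qed

lemma var_times_var:
  "var i * var j = Poly_Mapping.single (Poly_Mapping.single i 1 + Poly_Mapping.single j 1) 1"
  unfolding var_def by (simp add: mult_single)

lemma m11_times_schur_rows:
  assumes "is_partition mu"
  shows "m11 N * schur_rows N mu = (\<Sum>lam\<in>vstrip2 mu. schur_rows N lam)"
proof -
  define P where "P = {(i, j). i < j \<and> j < (N::nat)}"
  define g where "g R = Poly_Mapping.single (tableau_monomial R) (1::int)" for R
  have "m11 N * schur_rows N mu = (\<Sum>(i, j)\<in>P. var i * var j) * (\<Sum>R\<in>tableaux N mu. g R)"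
    unfolding m11_def schur_rows_def P_def g_def ..
  also have "\<dots> = (\<Sum>R\<in>tableaux N mu. \<Sum>p\<in>P. (case p of (i, j) \<Rightarrow> var i * var j) * g R)"
    unfolding sum_product by (rule sum.swap)
  also have "\<dots> = (\<Sum>x\<in>tableaux N mu \<times> P. g ((\<lambda>(R, i, j). row_insert i (row_insert j R)) x))"
    unfolding sum.cartesian_product
    by (rule sum.cong) (auto simp: var_times_var g_def mult_single tableau_monomial_row_insert ac_simps)
  also have "\<dots> = (\<Sum>R'\<in>(\<Union>lam\<in>vstrip2 mu. tableaux N lam). g R')"
    unfolding P_def by (rule sum.reindex_bij_betw[OF pieri_insert_bij[OF assms]])
  also have "\<dots> = (\<Sum>lam\<in>vstrip2 mu. \<Sum>R\<in>tableaux N lam. g R)"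
    by (rule sum.UNION_disjoint) (simp_all add: finite_vstrip2 finite_tableaux, auto simp: tableaux_def)
  finally show ?thesis unfolding schur_rows_def g_def .
qed

lemma single_sum: "Poly_Mapping.single k (sum f A) = (\<Sum>a\<in>A. Poly_Mapping.single k (f a))"
proof (cases "finite A")
  case True then show ?thesis by (induction A rule: finite_induct) (auto simp: single_add)
qed simp

lemma m11_times_schur_rows_sum:
  "m11 N * (\<Sum>mu\<in>partitions_of d. const (c mu) * schur_rows N mu) =
    (\<Sum>lam\<in>partitions_of (d + 2).
       const (\<Sum>mu\<in>partitions_of d. if lam \<in> vstrip2 mu then c mu else 0) * schur_rows N lam)"
proof -
  have "m11 N * (\<Sum>mu\<in>partitions_of d. const (c mu) * schur_rows N mu) =
      (\<Sum>mu\<in>partitions_of d. const (c mu) * (m11 N * schur_rows N mu))"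
    by (simp add: sum_distrib_left mult.left_commute)
  also have "\<dots> = (\<Sum>mu\<in>partitions_of d. const (c mu) * (\<Sum>lam\<in>vstrip2 mu. schur_rows N lam))"
    by (intro sum.cong refl) (simp add: m11_times_schur_rows partitions_of_def)
  also have "\<dots> = (\<Sum>mu\<in>partitions_of d. \<Sum>lam\<in>vstrip2 mu. const (c mu) * schur_rows N lam)"
    by (simp add: sum_distrib_left)
  also have "\<dots> = (\<Sum>mu\<in>partitions_of d. \<Sum>lam\<in>partitions_of (d + 2).
      if lam \<in> vstrip2 mu then const (c mu) * schur_rows N lam else 0)"
    using vstrip2_subset_partitions_of finite_partitions_of
    by (intro sum.cong refl sum.mono_neutral_cong_left) (auto simp: partitions_of_def)
  also have "\<dots> = (\<Sum>lam\<in>partitions_of (d + 2). \<Sum>mu\<in>partitions_of d.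
      if lam \<in> vstrip2 mu then const (c mu) * schur_rows N lam else 0)"
    by (rule sum.swap)
  also have "\<dots> = (\<Sum>lam\<in>partitions_of (d + 2).
      const (\<Sum>mu\<in>partitions_of d. if lam \<in> vstrip2 mu then c mu else 0) * schur_rows N lam)"
    unfolding const_def single_sum sum_distrib_right by (intro sum.cong) auto
  finally show ?thesis .
qed

fun m11_coeff :: "nat \<Rightarrow> nat list \<Rightarrow> int" where
  "m11_coeff 0 lam = of_bool (lam = [])"
| "m11_coeff (Suc n) lam =
     (\<Sum>mu\<in>partitions_of (2 * n). if lam \<in> vstrip2 mu then m11_coeff n mu else 0)"

lemma schur_rows_Nil: "schur_rows N [] = 1"
proof -
  have "tableaux N [] = {[]}" by (auto simp: tableaux_def)
  then show ?thesis by (simp add: schur_rows_def tableau_monomial_def)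
qed

lemma m11_power_expansion:
  "m11 N ^ n = (\<Sum>lam\<in>partitions_of (2 * n). const (m11_coeff n lam) * schur_rows N lam)"
proof (induction n)
  case 0
  then show ?case by (simp add: partitions_of_0 schur_rows_Nil const_def)
next
  case (Suc n)
  then show ?case
    using m11_times_schur_rows_sum[of N "m11_coeff n" "2 * n"] by simp
qed

section \<open>Fillings of Young diagrams as lists of rows\<close>

definition rows_of :: "nat list \<Rightarrow> (nat \<times> nat \<Rightarrow> nat) \<Rightarrow> nat list list" where
  "rows_of lam T = map (\<lambda>i. map (\<lambda>j. T (i, j)) [0..<lam ! i]) [0..<length lam]"

definition filling_of :: "nat list list \<Rightarrow> (nat \<times> nat \<Rightarrow> nat)" where
  "filling_of R = (\<lambda>(i, j). if i < length R \<and> j < length (R ! i) then R ! i ! j else 0)"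

lemma is_tableau_iff_nth:
  "is_tableau R \<longleftrightarrow> (\<forall>i<length R. R ! i \<noteq> [] \<and> sorted (R ! i))
     \<and> (\<forall>i. Suc i < length R \<longrightarrow> row_above (R ! i) (R ! Suc i))"
proof (induction R)
  case (Cons r R)
  have rows: "(\<forall>i<length (r # R). (r # R) ! i \<noteq> [] \<and> sorted ((r # R) ! i)) \<longleftrightarrow>
      r \<noteq> [] \<and> sorted r \<and> (\<forall>i<length R. R ! i \<noteq> [] \<and> sorted (R ! i))"
    by (simp add: All_less_Suc2)
  have cols: "(\<forall>i. Suc i < length (r # R) \<longrightarrow> row_above ((r # R) ! i) ((r # R) ! Suc i)) \<longleftrightarrow>
      (R \<noteq> [] \<longrightarrow> row_above r (hd R)) \<and> (\<forall>i. Suc i < length R \<longrightarrow> row_above (R ! i) (R ! Suc i))"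
    by (cases R) (simp_all add: All_less_Suc2)
  show ?case unfolding rows cols is_tableau.simps Cons.IH by blast
qed simp

lemma ssyt_row_mono:
  assumes T: "T \<in> ssyt lam N" and c: "(i, j') \<in> cells lam" and jj: "j \<le> j'"
  shows "T (i, j) \<le> T (i, j')"
  using c jj
proof (induction j')
  case (Suc j')
  show ?case
  proof (cases "j = Suc j'")
    case False
    then have "T (i, j) \<le> T (i, j')" using Suc by (simp add: cells_def)
    also have "T (i, j') \<le> T (i, Suc j')" using T Suc.prems unfolding ssyt_def by blast
    finally show ?thesis .
  qed simp
qed simp

lemma rows_of_mem:
  assumes lam: "is_partition lam" and T: "T \<in> ssyt lam N"
  shows "rows_of lam T \<in> tableaux N lam"
proof -
  let ?R = "rows_of lam T"
  have len: "length ?R = length lam" by (simp add: rows_of_def)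
  have nth: "i < length lam \<Longrightarrow> ?R ! i = map (\<lambda>j. T (i, j)) [0..<lam ! i]" for i
    by (simp add: rows_of_def)
  have shape: "shape ?R = lam" by (rule nth_equalityI) (auto simp: len nth)
  have rows: "?R ! i \<noteq> [] \<and> sorted (?R ! i)" if i: "i < length ?R" for i
  proof
    show "?R ! i \<noteq> []" using nth_part_pos_iff[OF lam, of i] i by (simp add: len nth nth_part_def)
    show "sorted (?R ! i)" unfolding sorted_iff_nth_mono
      using ssyt_row_mono[OF T] i by (auto simp: len nth cells_def)
  qed
  have cols: "row_above (?R ! i) (?R ! Suc i)" if i: "Suc i < length ?R" for i
  proof -
    have "lam ! Suc i \<le> lam ! i" using nth_part_antimono[OF lam, of i "Suc i"] i by (simp add: nth_part_def len)
    moreover have "T (i, j) < T (Suc i, j)" if "j < lam ! Suc i" for j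
      using T that i unfolding ssyt_def by (auto simp: cells_def len)
    ultimately show ?thesis unfolding row_above_def using i by (simp add: len nth)
  qed
  have "set (concat ?R) \<subseteq> {..<N}"
    using T unfolding ssyt_def rows_of_def by (auto simp: cells_def)
  then show ?thesis using rows cols shape unfolding tableaux_def is_tableau_iff_nth by blast
qed

lemma rows_of_inj:
  assumes "T \<in> ssyt lam N" "T' \<in> ssyt lam N" "rows_of lam T = rows_of lam T'"
  shows "T = T'"
proof
  fix c :: "nat \<times> nat"
  obtain i j where c: "c = (i, j)" by (cases c)
  show "T c = T' c"
  proof (cases "c \<in> cells lam")
    case True
    then have "rows_of lam T ! i ! j = T (i, j)" "rows_of lam T' ! i ! j = T' (i, j)"
      using c by (auto simp: rows_of_def cells_def)
    then show ?thesis using assms(3) c by simp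
  next
    case False
    then show ?thesis using assms c unfolding ssyt_def by auto
  qed
qed

lemma filling_of_mem:
  assumes R: "R \<in> tableaux N lam"
  shows "filling_of R \<in> ssyt lam N" and "rows_of lam (filling_of R) = R"
proof -
  have sR: "is_tableau R" "set (concat R) \<subseteq> {..<N}" "shape R = lam"
    using R by (auto simp: tableaux_def)
  then have len: "length lam = length R" and lni: "i < length R \<Longrightarrow> lam ! i = length (R ! i)" for i
    by auto
  have cl: "cells lam = {(i, j). i < length R \<and> j < length (R ! i)}"
    unfolding cells_def using len lni by auto
  note tab = sR(1)[unfolded is_tableau_iff_nth]
  show "filling_of R \<in> ssyt lam N"
    unfolding ssyt_def cl
  proof (intro CollectI conjI allI impI ballI)
    fix c assume "c \<in> {(i, j). i < length R \<and> j < length (R ! i)}"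
    then obtain i j where c: "c = (i, j)" "i < length R" "j < length (R ! i)" by blast
    then have "R ! i ! j \<in> set (concat R)"
      unfolding set_concat by (blast intro: nth_mem)
    then have "filling_of R c \<in> set (concat R)"
      using c by (simp add: filling_of_def)
    then show "filling_of R c < N" using sR(2) by auto
  next
    fix i j assume "(i, Suc j) \<in> {(i, j). i < length R \<and> j < length (R ! i)}"
    then show "filling_of R (i, j) \<le> filling_of R (i, Suc j)"
      using tab by (auto simp: filling_of_def sorted_nth_mono)
  next
    fix i j assume "(Suc i, j) \<in> {(i, j). i < length R \<and> j < length (R ! i)}"
    then show "filling_of R (i, j) < filling_of R (Suc i, j)"
      using tab unfolding filling_of_def row_above_def by auto
  qed (auto simp: filling_of_def split: if_splits)
  show "rows_of lam (filling_of R) = R"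
    by (rule nth_equalityI) (auto simp: rows_of_def filling_of_def len lni intro!: nth_equalityI)
qed

lemma bij_betw_rows_of:
  assumes "is_partition lam"
  shows "bij_betw (rows_of lam) (ssyt lam N) (tableaux N lam)"
proof (rule bij_betw_imageI)
  show "inj_on (rows_of lam) (ssyt lam N)" using rows_of_inj by (blast intro: inj_onI)
  show "rows_of lam ` ssyt lam N = tableaux N lam"
  proof
    show "rows_of lam ` ssyt lam N \<subseteq> tableaux N lam" using rows_of_mem[OF assms] by blast
    show "tableaux N lam \<subseteq> rows_of lam ` ssyt lam N"
    proof
      fix R assume "R \<in> tableaux N lam"
      then show "R \<in> rows_of lam ` ssyt lam N" using filling_of_mem by (metis image_eqI)
    qed
  qed
qed

lemma sum_list_map_concat:
  "sum_list (map f (concat xss)) = sum_list (map (\<lambda>xs. sum_list (map f xs)) xss)"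
  by (induction xss) auto

lemma content_eq_tableau_monomial: "content lam T = tableau_monomial (rows_of lam T)"
proof -
  have "content lam T = (\<Sum>(i, j)\<in>(SIGMA i:{..<length lam}. {..<lam ! i}). Poly_Mapping.single (T (i, j)) 1)"
    unfolding content_def cells_def by (rule sum.cong) auto
  also have "\<dots> = (\<Sum>i<length lam. \<Sum>j<lam ! i. Poly_Mapping.single (T (i, j)) 1)"
    by (rule sum.Sigma[symmetric]) auto
  also have "\<dots> = tableau_monomial (rows_of lam T)"
    unfolding tableau_monomial_def rows_of_def
    by (simp add: sum_list_map_concat o_def atLeast0LessThan[symmetric]
        sum_set_upt_conv_sum_list_nat[symmetric])
  finally show ?thesis .
qed

lemma schur_eq_schur_rows: "is_partition lam \<Longrightarrow> schur lam N = schur_rows N lam"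
  unfolding schur_def schur_rows_def content_eq_tableau_monomial
  by (rule sum.reindex_bij_betw[OF bij_betw_rows_of])

section \<open>Triangularity of Schur polynomials\<close>

definition partition_monomial :: "nat list \<Rightarrow> (nat \<Rightarrow>\<^sub>0 nat)" where
  "partition_monomial mu = (\<Sum>i<length mu. Poly_Mapping.single i (mu ! i))"

lemma lookup_partition_monomial: "Poly_Mapping.lookup (partition_monomial mu) k = nth_part mu k"
proof -
  have "Poly_Mapping.lookup (partition_monomial mu) k = (\<Sum>i<length mu. (mu ! i when i = k))"
    unfolding partition_monomial_def lookup_sum lookup_single by simp
  also have "\<dots> = nth_part mu k"
    unfolding nth_part_def by (cases "k < length mu") (auto simp: when_def sum.delta)
  finally show ?thesis .
qed

lemma cells_eq_Sigma: "cells lam = (SIGMA i:{..<length lam}. {..<lam ! i})"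
  unfolding cells_def by auto

lemma finite_cells: "finite (cells lam)"
  unfolding cells_eq_Sigma by auto

lemma cells_row: "{c \<in> cells lam. fst c = i} = {i} \<times> {..<nth_part lam i}"
  unfolding cells_def nth_part_def by auto

lemma lookup_content: "Poly_Mapping.lookup (content lam T) v = card {c \<in> cells lam. T c = v}"
proof -
  have "Poly_Mapping.lookup (content lam T) v = (\<Sum>c\<in>cells lam. (1 when T c = v))"
    unfolding content_def lookup_sum lookup_single by simp
  also have "\<dots> = card {c \<in> cells lam. T c = v}"
    using finite_cells by (simp add: when_def sum.If_cases Int_def)
  finally show ?thesis .
qed

lemma ssyt_row_le_entry:
  assumes lam: "is_partition lam" and T: "T \<in> ssyt lam N"
  shows "(i, j) \<in> cells lam \<Longrightarrow> i \<le> T (i, j)"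
proof (induction i)
  case (Suc i)
  have "lam ! Suc i \<le> lam ! i"
    using nth_part_antimono[OF lam, of i "Suc i"] Suc.prems by (simp add: nth_part_def cells_def)
  then have "(i, j) \<in> cells lam" using Suc.prems by (auto simp: cells_def)
  then have "i \<le> T (i, j)" by (rule Suc.IH)
  also have "T (i, j) < T (Suc i, j)" using T Suc.prems unfolding ssyt_def by blast
  finally show ?case by simp
qed simp

lemma content_dominated:
  assumes lam: "is_partition lam" and T: "T \<in> ssyt lam N"
    and content: "content lam T = partition_monomial mu"
  shows "(\<Sum>i\<le>k. nth_part mu i) \<le> (\<Sum>i\<le>k. nth_part lam i)"
proof -
  have "(\<Sum>i\<le>k. nth_part mu i) = (\<Sum>v\<le>k. card {c \<in> cells lam. T c = v})"
    using lookup_content[of lam T] content by (simp add: lookup_partition_monomial)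
  also have "\<dots> = card (\<Union>v\<in>{..k}. {c \<in> cells lam. T c = v})"
    by (rule card_UN_disjoint[symmetric]) (auto simp: finite_cells)
  also have "(\<Union>v\<in>{..k}. {c \<in> cells lam. T c = v}) = {c \<in> cells lam. T c \<le> k}" by auto
  also have "card \<dots> \<le> card {c \<in> cells lam. fst c \<le> k}"
    using ssyt_row_le_entry[OF lam T] finite_cells by (intro card_mono) force+
  also have "{c \<in> cells lam. fst c \<le> k} = (\<Union>i\<in>{..k}. {c \<in> cells lam. fst c = i})" by auto
  also have "card \<dots> = (\<Sum>i\<le>k. card {c \<in> cells lam. fst c = i})"
    by (rule card_UN_disjoint) (auto simp: finite_cells)
  also have "\<dots> = (\<Sum>i\<le>k. nth_part lam i)"
    unfolding cells_row by (simp add: card_cartesian_product)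
  finally show ?thesis .
qed

lemma lex_less_of_first_difference:
  "(\<forall>i<k. nth_part a i = nth_part b i) \<Longrightarrow> nth_part a k < nth_part b k \<Longrightarrow> 0 \<notin> set a \<Longrightarrow> a < b"
proof (induction k arbitrary: a b)
  case 0
  then show ?case by (cases a; cases b) auto
next
  case (Suc k)
  show ?case
  proof (cases a)
    case Nil
    then show ?thesis using Suc.prems(2) by (cases b) auto
  next
    case (Cons x a')
    then obtain b' where b: "b = x # b'"
      using Suc.prems(1)[rule_format, of 0] Suc.prems(3) by (cases b) auto
    have "a' < b'"
      using Suc.prems Cons b by (intro Suc.IH) auto
    then show ?thesis using Cons b by simp
  qed
qed

lemma dominated_imp_lex_less:
  assumes lam: "is_partition lam" and mu: "is_partition mu" and "lam \<noteq> mu"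
    and dom: "\<And>k. (\<Sum>i\<le>k. nth_part mu i) \<le> (\<Sum>i\<le>k. nth_part lam i)"
  shows "mu < lam"
proof -
  have ex: "\<exists>k. nth_part lam k \<noteq> nth_part mu k" using partition_eqI[OF lam mu] assms(3) by blast
  define k where "k = (LEAST k. nth_part lam k \<noteq> nth_part mu k)"
  have k: "nth_part lam k \<noteq> nth_part mu k" unfolding k_def by (rule LeastI_ex[OF ex])
  have before: "\<forall>i<k. nth_part mu i = nth_part lam i"
    unfolding k_def using not_less_Least by fastforce
  then have "(\<Sum>i<k. nth_part mu i) = (\<Sum>i<k. nth_part lam i)" by simp
  then have "nth_part mu k \<le> nth_part lam k"
    using dom[of k] by (simp add: lessThan_Suc_atMost[symmetric])
  then show ?thesis
    using k before mu lex_less_of_first_difference unfolding is_partition_def by force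
qed

lemma content_partition_monomial_imp_le:
  assumes "is_partition lam" "is_partition mu" "T \<in> ssyt lam N"
    "content lam T = partition_monomial mu"
  shows "mu \<le> lam"
  using dominated_imp_lex_less[OF assms(1,2)] content_dominated[OF assms(1,3,4)] by force

lemma ssyt_with_own_content:
  assumes "length mu \<le> N"
  shows "\<exists>T\<in>ssyt mu N. content mu T = partition_monomial mu"
proof -
  define T where "T c = (if c \<in> cells mu then fst c else 0)" for c
  have "T \<in> ssyt mu N" using assms unfolding ssyt_def T_def by (auto simp: cells_def)
  moreover have "content mu T = partition_monomial mu"
  proof (rule poly_mapping_eqI)
    fix k
    have "{c \<in> cells mu. T c = k} = {c \<in> cells mu. fst c = k}" by (auto simp: T_def)
    then show "Poly_Mapping.lookup (content mu T) k = Poly_Mapping.lookup (partition_monomial mu) k"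
      unfolding lookup_content lookup_partition_monomial cells_row by (simp add: card_cartesian_product)
  qed
  ultimately show ?thesis by blast
qed

lemma finite_ssyt: "is_partition lam \<Longrightarrow> finite (ssyt lam N)"
  using bij_betw_finite[OF bij_betw_rows_of] finite_tableaux by blast

lemma lookup_const_times_schur:
  assumes "is_partition lam"
  shows "Poly_Mapping.lookup (const c * schur lam N) m
    = c * int (card {T \<in> ssyt lam N. content lam T = m})"
proof -
  have "const c * schur lam N = (\<Sum>T\<in>ssyt lam N. Poly_Mapping.single (content lam T) c)"
    unfolding schur_def const_def sum_distrib_left by (simp add: mult_single)
  then have "Poly_Mapping.lookup (const c * schur lam N) m
      = (\<Sum>T\<in>ssyt lam N. (c when content lam T = m))"
    by (simp add: lookup_sum lookup_single)
  also have "\<dots> = c * int (card {T \<in> ssyt lam N. content lam T = m})"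
    using finite_ssyt[OF assms] by (simp add: when_def sum.If_cases Int_def)
  finally show ?thesis .
qed

(* Compare the coefficients of x^l0 for the lexicographically largest l0 with a l0 \<noteq> 0:
   s_lam contains x^l0 only if l0 \<le> lam, and s_l0 contains it because length l0 \<le> N. *)

lemma schur_linear_independent:
  assumes "d \<le> N" and zero: "(\<Sum>lam\<in>partitions_of d. const (a lam) * schur lam N) = 0"
  shows "\<forall>lam\<in>partitions_of d. a lam = 0"
proof (rule ccontr)
  define D where "D = {lam \<in> partitions_of d. a lam \<noteq> 0}"
  assume "\<not> ?thesis"
  then have "D \<noteq> {}" "finite D" using finite_partitions_of by (auto simp: D_def)
  define l0 where "l0 = Max D"
  have l0: "l0 \<in> D" "\<And>lam. lam \<in> D \<Longrightarrow> lam \<le> l0"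
    using \<open>D \<noteq> {}\<close> \<open>finite D\<close> by (simp_all add: l0_def)
  then have l0P: "l0 \<in> partitions_of d" "is_partition l0" "sum_list l0 = d"
    by (auto simp: D_def partitions_of_def)
  define K where "K lam = int (card {T \<in> ssyt lam N. content lam T = partition_monomial l0})" for lam
  have "0 = Poly_Mapping.lookup (\<Sum>lam\<in>partitions_of d. const (a lam) * schur lam N) (partition_monomial l0)"
    unfolding zero by simp
  also have "\<dots> = (\<Sum>lam\<in>partitions_of d. a lam * K lam)"
    unfolding lookup_sum K_def
    by (intro sum.cong refl lookup_const_times_schur) (simp add: partitions_of_def)
  also have "\<dots> = a l0 * K l0"
  proof -
    have other: "a lam * K lam = 0" if lam: "lam \<in> partitions_of d - {l0}" for lam
    proof (cases "K lam = 0")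
      case False
      then have "{T \<in> ssyt lam N. content lam T = partition_monomial l0} \<noteq> {}"
        unfolding K_def by (metis card.empty of_nat_0)
      then obtain T where "T \<in> ssyt lam N" "content lam T = partition_monomial l0" by blast
      then have "l0 \<le> lam"
        using content_partition_monomial_imp_le l0P(2) lam by (auto simp: partitions_of_def)
      then have "lam \<notin> D" using l0(2) lam by force
      then show ?thesis using lam by (simp add: D_def)
    qed simp
    have "(\<Sum>lam\<in>partitions_of d. a lam * K lam)
        = a l0 * K l0 + (\<Sum>lam\<in>partitions_of d - {l0}. a lam * K lam)"
      by (rule sum.remove[OF finite_partitions_of l0P(1)])
    also have "(\<Sum>lam\<in>partitions_of d - {l0}. a lam * K lam) = 0"
      by (intro sum.neutral ballI other)
    finally show ?thesis by simp
  qed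
  finally have "a l0 * K l0 = 0" by simp
  moreover have "K l0 > 0"
  proof -
    have "length l0 \<le> N" using length_le_sum_list[OF l0P(2)] l0P(3) assms(1) by simp
    then have "{T \<in> ssyt l0 N. content l0 T = partition_monomial l0} \<noteq> {}"
      using ssyt_with_own_content by blast
    then show ?thesis unfolding K_def using finite_ssyt[OF l0P(2)] by (simp add: card_gt_0_iff)
  qed
  ultimately show False using l0(1) by (simp add: D_def)
qed

lemma schur_coeffs_unique:
  assumes "d \<le> N"
    and "(\<Sum>lam\<in>partitions_of d. const (c lam) * schur lam N)
       = (\<Sum>lam\<in>partitions_of d. const (c' lam) * schur lam N)"
  shows "\<forall>lam\<in>partitions_of d. c lam = c' lam"
proof -
  have "(\<Sum>lam\<in>partitions_of d. const (c lam - c' lam) * schur lam N) = 0"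
    using assms(2) by (simp add: const_def single_diff left_diff_distrib sum_subtractf)
  then show ?thesis using schur_linear_independent[OF assms(1), of "\<lambda>lam. c lam - c' lam"] by simp
qed

section \<open>Riordan paths and two-column shapes\<close>

definition riordan_prefixes :: "nat \<Rightarrow> int \<Rightarrow> int list set" where
  "riordan_prefixes n h = {s. length s = n \<and> set s \<subseteq> {-1, 0, 1}
      \<and> (\<forall>k\<le>n. sum_list (take k s) \<ge> 0)
      \<and> sum_list s = h
      \<and> (\<forall>k<n. s ! k = 0 \<longrightarrow> sum_list (take k s) > 0)}"

lemma riordan_paths_eq: "riordan_paths n = riordan_prefixes n 0"
  unfolding riordan_paths_def riordan_prefixes_def by simp

lemma riordan_prefixes_0: "riordan_prefixes 0 h = (if h = 0 then {[]} else {})"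
  unfolding riordan_prefixes_def by auto

lemma riordan_prefixes_empty:
  assumes "h < 0 \<or> int n < h"
  shows "riordan_prefixes n h = {}"
proof -
  have "0 \<le> h \<and> h \<le> int n" if s: "s \<in> riordan_prefixes n h" for s
  proof -
    have "set s \<subseteq> {-1, 0, 1}" "length s = n" "0 \<le> sum_list (take n s)" "sum_list s = h"
      using s unfolding riordan_prefixes_def by auto
    moreover have "sum_list s \<le> int (length s)" if "set s \<subseteq> {-1, 0, 1}" for s :: "int list"
      using that by (induction s) auto
    ultimately show ?thesis by auto
  qed
  then show ?thesis using assms by fastforce
qed

lemma finite_riordan_prefixes: "finite (riordan_prefixes n h)"
proof (rule finite_subset)
  show "riordan_prefixes n h \<subseteq> {s. set s \<subseteq> {-1, 0, 1} \<and> length s \<le> n}"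
    unfolding riordan_prefixes_def by auto
  show "finite {s. set s \<subseteq> {-1::int, 0, 1} \<and> length s \<le> n}"
    by (rule finite_lists_length_le) simp
qed

lemma snoc_in_riordan_prefixes:
  "t @ [e] \<in> riordan_prefixes (Suc n) h \<longleftrightarrow>
     t \<in> riordan_prefixes n (h - e) \<and> e \<in> {-1, 0, 1} \<and> (e = 0 \<longrightarrow> 0 < h) \<and> 0 \<le> h"
proof -
  have le: "(\<forall>k\<le>Suc n. P k) \<longleftrightarrow> (\<forall>k\<le>n. P k) \<and> P (Suc n)" for P
    by (auto simp: le_Suc_eq)
  have less: "(\<forall>k<Suc n. P k) \<longleftrightarrow> (\<forall>k<n. P k) \<and> P n" for P
    by (auto simp: less_Suc_eq)
  show ?thesis
  proof (cases "length t = n")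
    case True
    have take_le: "take k (t @ [e]) = take k t" if "k \<le> n" for k
      using that True by simp
    have nth_less: "(t @ [e]) ! k = t ! k" if "k < n" for k
      using that True by (simp add: nth_append)
    have A: "(\<forall>k\<le>Suc n. 0 \<le> sum_list (take k (t @ [e])))
        \<longleftrightarrow> (\<forall>k\<le>n. 0 \<le> sum_list (take k t)) \<and> 0 \<le> sum_list t + e"
      unfolding le using take_le True by simp
    have B: "(\<forall>k<Suc n. (t @ [e]) ! k = 0 \<longrightarrow> 0 < sum_list (take k (t @ [e])))
        \<longleftrightarrow> (\<forall>k<n. t ! k = 0 \<longrightarrow> 0 < sum_list (take k t)) \<and> (e = 0 \<longrightarrow> 0 < sum_list t)"
      unfolding less using take_le nth_less True by (simp add: nth_append)
    show ?thesis
      unfolding riordan_prefixes_def mem_Collect_eq A B using True by auto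
  next
    case False
    then show ?thesis unfolding riordan_prefixes_def by auto
  qed
qed

lemma riordan_prefixes_Suc:
  assumes "0 \<le> h"
  shows "riordan_prefixes (Suc n) h = (\<lambda>t. t @ [1]) ` riordan_prefixes n (h - 1)
    \<union> (\<lambda>t. t @ [0]) ` (if 0 < h then riordan_prefixes n h else {})
    \<union> (\<lambda>t. t @ [-1]) ` riordan_prefixes n (h + 1)"
proof (intro equalityI subsetI)
  fix s assume s: "s \<in> riordan_prefixes (Suc n) h"
  then have "s \<noteq> []" by (auto simp: riordan_prefixes_def)
  then obtain t e where "s = t @ [e]" by (metis append_butlast_last_id)
  then show "s \<in> (\<lambda>t. t @ [1]) ` riordan_prefixes n (h - 1)
    \<union> (\<lambda>t. t @ [0]) ` (if 0 < h then riordan_prefixes n h else {})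
    \<union> (\<lambda>t. t @ [-1]) ` riordan_prefixes n (h + 1)"
    using s snoc_in_riordan_prefixes[of t e n h] by auto
qed (use assms snoc_in_riordan_prefixes in \<open>auto split: if_splits\<close>)

lemma card_riordan_prefixes_Suc:
  assumes "0 \<le> h"
  shows "card (riordan_prefixes (Suc n) h) = card (riordan_prefixes n (h - 1))
    + (if 0 < h then card (riordan_prefixes n h) else 0) + card (riordan_prefixes n (h + 1))"
proof -
  let ?A = "(\<lambda>t. t @ [1]) ` riordan_prefixes n (h - 1)"
  let ?B = "(\<lambda>t. t @ [0]) ` (if 0 < h then riordan_prefixes n h else {})"
  let ?C = "(\<lambda>t. t @ [-1]) ` riordan_prefixes n (h + 1)"
  have card_snoc: "card ((\<lambda>t. t @ [e]) ` S) = card S" for e :: int and S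
    by (rule card_image) (simp add: inj_on_def)
  have "finite ?A" "finite ?B" "finite ?C" "?A \<inter> ?B = {}" "(?A \<union> ?B) \<inter> ?C = {}"
    using finite_riordan_prefixes by auto
  then have "card (?A \<union> ?B \<union> ?C) = card ?A + card ?B + card ?C"
    by (simp add: card_Un_disjoint)
  then show ?thesis unfolding riordan_prefixes_Suc[OF assms] card_snoc by simp
qed

definition two_column :: "nat \<Rightarrow> nat \<Rightarrow> nat list" where
  "two_column a h = replicate a 2 @ replicate (2 * h) 1"

lemma nth_part_two_column:
  "nth_part (two_column a h) i = (if i < a then 2 else if i < a + 2 * h then 1 else 0)"
  unfolding two_column_def nth_part_def by (auto simp: nth_append)

lemma is_partition_two_column: "is_partition (two_column a h)"
  unfolding two_column_def is_partition_def by (auto simp: sorted_wrt_iff_nth_less nth_append)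

lemma two_column_mem_partitions_of: "2 * a + 2 * h = d \<Longrightarrow> two_column a h \<in> partitions_of d"
  unfolding partitions_of_def two_column_def is_partition_def
  by (auto simp: sum_list_replicate sorted_wrt_iff_nth_less nth_append)

lemma length_two_column: "length (two_column a h) = a + 2 * h"
  by (simp add: two_column_def)

lemma two_column_eqI:
  "is_partition mu \<Longrightarrow> (\<And>k. nth_part mu k = (if k < a then 2 else if k < a + 2 * h then 1 else 0))
    \<Longrightarrow> mu = two_column a h"
  using partition_eqI[OF _ is_partition_two_column] nth_part_two_column by metis

lemma two_column_added_rows:
  assumes mu: "is_partition mu" and "r1 < r2"
    and r: "\<And>k. nth_part (two_column a h) k = nth_part mu k + of_bool (k = r1) + of_bool (k = r2)"
  shows "(2 \<le> a \<and> r1 = a - 2 \<and> r2 = a - 1) \<or> (1 \<le> a \<and> 1 \<le> h \<and> r1 = a - 1 \<and> r2 = a + 2 * h - 1)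
      \<or> (1 \<le> h \<and> r1 = a + 2 * h - 2 \<and> r2 = a + 2 * h - 1)"
proof -
  have mu_k: "nth_part mu k = nth_part (two_column a h) k - of_bool (k = r1) - of_bool (k = r2)" for k
    using r[of k] by simp
  have mono: "nth_part mu (Suc k) \<le> nth_part mu k" for k
    using nth_part_antimono[OF mu] by simp
  have pos: "0 < nth_part (two_column a h) r1" "0 < nth_part (two_column a h) r2"
    using r[of r1] r[of r2] \<open>r1 < r2\<close> by auto
  show ?thesis
    using mono[of r1] mono[of r2] pos \<open>r1 < r2\<close> unfolding mu_k nth_part_two_column
    \<comment> \<open>the split on h = 0 lets linear arithmetic rule out 2 * h = 1\<close>
    by (cases "h = 0") (auto simp: of_bool_def split: if_splits)
qed

lemma two_column_in_vstrip2_iff: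
  assumes mu: "is_partition mu"
  shows "two_column a h \<in> vstrip2 mu \<longleftrightarrow>
    (1 \<le> h \<and> mu = two_column a (h - 1)) \<or> (1 \<le> a \<and> 1 \<le> h \<and> mu = two_column (a - 1) h)
      \<or> (2 \<le> a \<and> mu = two_column (a - 2) (h + 1))"
proof
  assume "two_column a h \<in> vstrip2 mu"
  then obtain r1 r2 where r: "r1 < r2"
    "\<And>k. nth_part (two_column a h) k = nth_part mu k + of_bool (k = r1) + of_bool (k = r2)"
    unfolding vstrip2_def by blast
  have mu_k: "nth_part mu k = nth_part (two_column a h) k - of_bool (k = r1) - of_bool (k = r2)" for k
    using r(2)[of k] by simp
  from two_column_added_rows[OF mu r]
  consider (down) "2 \<le> a" "r1 = a - 2" "r2 = a - 1"
    | (flat) "1 \<le> a" "1 \<le> h" "r1 = a - 1" "r2 = a + 2 * h - 1"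
    | (up) "1 \<le> h" "r1 = a + 2 * h - 2" "r2 = a + 2 * h - 1"
    by blast
  then show "(1 \<le> h \<and> mu = two_column a (h - 1)) \<or> (1 \<le> a \<and> 1 \<le> h \<and> mu = two_column (a - 1) h)
      \<or> (2 \<le> a \<and> mu = two_column (a - 2) (h + 1))"
  proof cases
    case down
    then have "mu = two_column (a - 2) (h + 1)"
      by (intro two_column_eqI[OF mu]) (auto simp: mu_k nth_part_two_column)
    then show ?thesis using down by simp
  next
    case flat
    then have "mu = two_column (a - 1) h"
      by (intro two_column_eqI[OF mu]) (auto simp: mu_k nth_part_two_column)
    then show ?thesis using flat by simp
  next
    case up
    then have "mu = two_column a (h - 1)"
      by (intro two_column_eqI[OF mu]) (auto simp: mu_k nth_part_two_column)
    then show ?thesis using up by simp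
  qed
next
  assume "(1 \<le> h \<and> mu = two_column a (h - 1)) \<or> (1 \<le> a \<and> 1 \<le> h \<and> mu = two_column (a - 1) h)
      \<or> (2 \<le> a \<and> mu = two_column (a - 2) (h + 1))"
  then show "two_column a h \<in> vstrip2 mu"
  proof (elim disjE)
    assume "1 \<le> h \<and> mu = two_column a (h - 1)"
    then show ?thesis
      by (intro vstrip2I[OF is_partition_two_column, of "a + 2 * h - 2" "a + 2 * h - 1"])
        (auto simp: nth_part_two_column)
  next
    assume "1 \<le> a \<and> 1 \<le> h \<and> mu = two_column (a - 1) h"
    then show ?thesis
      by (intro vstrip2I[OF is_partition_two_column, of "a - 1" "a + 2 * h - 1"])
        (auto simp: nth_part_two_column)
  next
    assume "2 \<le> a \<and> mu = two_column (a - 2) (h + 1)"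
    then show ?thesis
      by (intro vstrip2I[OF is_partition_two_column, of "a - 2" "a - 1"])
        (auto simp: nth_part_two_column)
  qed
qed

lemma sum_if_conj_eq:
  "finite A \<Longrightarrow> (c \<Longrightarrow> x \<in> A) \<Longrightarrow> (\<Sum>y\<in>A. if c \<and> y = x then f y else 0) = (if c then f x else 0)"
  by (cases c) (simp_all add: sum.delta)

lemma m11_coeff_Suc_two_column:
  assumes "a + h = Suc n"
  shows "m11_coeff (Suc n) (two_column a h) =
      (if 1 \<le> h then m11_coeff n (two_column a (h - 1)) else 0)
    + (if 1 \<le> a \<and> 1 \<le> h then m11_coeff n (two_column (a - 1) h) else 0)
    + (if 2 \<le> a then m11_coeff n (two_column (a - 2) (h + 1)) else 0)"
proof -
  let ?P = "partitions_of (2 * n)"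
  let ?f = "m11_coeff n"
  define m1 m2 m3 where "m1 = two_column a (h - 1)" "m2 = two_column (a - 1) h"
    "m3 = two_column (a - 2) (h + 1)"
  have in_P: "1 \<le> h \<Longrightarrow> m1 \<in> ?P" "1 \<le> a \<Longrightarrow> m2 \<in> ?P" "2 \<le> a \<Longrightarrow> m3 \<in> ?P"
    unfolding m1_m2_m3_def using assms by (auto intro: two_column_mem_partitions_of)
  have "length m1 = a + 2 * (h - 1)" "length m2 = a - 1 + 2 * h" "length m3 = a - 2 + 2 * (h + 1)"
    unfolding m1_m2_m3_def by (simp_all add: length_two_column)
  then have distinct: "1 \<le> h \<Longrightarrow> 1 \<le> a \<Longrightarrow> m1 \<noteq> m2" "1 \<le> h \<Longrightarrow> 2 \<le> a \<Longrightarrow> m1 \<noteq> m3"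
      "2 \<le> a \<Longrightarrow> m2 \<noteq> m3"
    by auto
  have "(if two_column a h \<in> vstrip2 mu then ?f mu else 0) =
      (if 1 \<le> h \<and> mu = m1 then ?f mu else 0) + (if (1 \<le> a \<and> 1 \<le> h) \<and> mu = m2 then ?f mu else 0)
    + (if 2 \<le> a \<and> mu = m3 then ?f mu else 0)" if "mu \<in> ?P" for mu
    using that distinct two_column_in_vstrip2_iff[of mu a h]
    unfolding m1_m2_m3_def[symmetric] by (auto simp: partitions_of_def)
  then have "m11_coeff (Suc n) (two_column a h) =
      (\<Sum>mu\<in>?P. if 1 \<le> h \<and> mu = m1 then ?f mu else 0)
    + (\<Sum>mu\<in>?P. if (1 \<le> a \<and> 1 \<le> h) \<and> mu = m2 then ?f mu else 0)
    + (\<Sum>mu\<in>?P. if 2 \<le> a \<and> mu = m3 then ?f mu else 0)"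
    by (simp add: sum.distrib)
  also have "\<dots> = (if 1 \<le> h then ?f m1 else 0) + (if 1 \<le> a \<and> 1 \<le> h then ?f m2 else 0)
    + (if 2 \<le> a then ?f m3 else 0)"
    using in_P by (simp only: sum_if_conj_eq[OF finite_partitions_of])
  finally show ?thesis unfolding m1_m2_m3_def .
qed

lemma m11_coeff_two_column:
  "h \<le> n \<Longrightarrow> m11_coeff n (two_column (n - h) h) = int (card (riordan_prefixes n (int h)))"
proof (induction n arbitrary: h)
  case 0
  then show ?case by (simp add: two_column_def riordan_prefixes_0)
next
  case (Suc n)
  define a where "a = Suc n - h"
  have ah: "a + h = Suc n" using Suc.prems unfolding a_def by simp
  then have shift: "a - 1 = n - h" "a - 2 = n - (h + 1)" by auto
  have up: "(if 1 \<le> h then m11_coeff n (two_column a (h - 1)) else 0)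
      = int (card (riordan_prefixes n (int h - 1)))"
    using Suc.IH[of "h - 1"] Suc.prems a_def riordan_prefixes_empty[of "int h - 1" n] by (cases "1 \<le> h") auto
  have flat: "(if 1 \<le> a \<and> 1 \<le> h then m11_coeff n (two_column (a - 1) h) else 0)
      = (if 0 < int h then int (card (riordan_prefixes n (int h))) else 0)"
    using Suc.IH[of h] ah shift riordan_prefixes_empty[of "int h" n] by (cases "1 \<le> a") auto
  have down: "(if 2 \<le> a then m11_coeff n (two_column (a - 2) (h + 1)) else 0)
      = int (card (riordan_prefixes n (int h + 1)))"
    using Suc.IH[of "h + 1"] ah shift riordan_prefixes_empty[of "int h + 1" n]
    by (cases "2 \<le> a") (auto simp: add.commute)
  show ?case
    unfolding a_def[symmetric] m11_coeff_Suc_two_column[OF ah] up flat down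
      card_riordan_prefixes_Suc[OF of_nat_0_le_iff] by simp
qed

lemma m11_coeff_replicate_2: "m11_coeff n (replicate n 2) = int (riordan n)"
  using m11_coeff_two_column[of 0 n] by (simp add: two_column_def riordan_def riordan_paths_eq)

theorem proposition4p1:
  fixes n N :: nat
  assumes "n \<ge> 1" and "N \<ge> 2 * n"
  shows "(\<exists>c :: nat list \<Rightarrow> int.
            m11 N ^ n = (\<Sum>lam\<in>partitions_of (2 * n). const (c lam) * schur lam N))
       \<and> (\<forall>c :: nat list \<Rightarrow> int.
            m11 N ^ n = (\<Sum>lam\<in>partitions_of (2 * n). const (c lam) * schur lam N)
            \<longrightarrow> c (replicate n 2) = int (riordan n))"
proof (intro conjI exI allI impI)
  show expansion: "m11 N ^ n = (\<Sum>lam\<in>partitions_of (2 * n). const (m11_coeff n lam) * schur lam N)"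
    unfolding m11_power_expansion
    by (intro sum.cong refl) (simp add: schur_eq_schur_rows partitions_of_def)
  fix c assume "m11 N ^ n = (\<Sum>lam\<in>partitions_of (2 * n). const (c lam) * schur lam N)"
  then have "\<forall>lam\<in>partitions_of (2 * n). c lam = m11_coeff n lam"
    using expansion by (intro schur_coeffs_unique[OF assms(2)]) simp
  moreover have "replicate n 2 \<in> partitions_of (2 * n)"
    using two_column_mem_partitions_of[of n 0] by (simp add: two_column_def)
  ultimately show "c (replicate n 2) = int (riordan n)"
    using m11_coeff_replicate_2 by simp
qed

end
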